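(* Consider two bosonic modes with quadratures $(\hat q_1,\hat p_1,\hat q_2,\hat p_2)$, subsystem $A$ = mode 1, $B$ = mode 2, and the Hamiltonian $\hat H=\frac12(\hat p_1\hat q_2+\hat q_2\hat p_1)$, whose symplectic evolution is $$M(t)=\begin{pmatrix}1&0&t&0\\0&1&0&0\\0&0&1&0\\0&-t&0&1\end{pmatrix}.$$ Then for every $t\ge0$, $$\inf_{\sigma\ \mathrm{Gaussian}}\Big(I(A;B)(\sigma)+I(A;B)(\mathcal U_{M(t)}(\sigma))\Big)\ \le\ 2\ln\frac e2,$$ the infimum being over all Gaussian states $\sigma$ of $AB$.
   Context: Quadratures satisfy $[\hat\xi^a,\hat\xi^b]=i\Omega_4^{ab}$ with $\Omega_4=\bigoplus_{i=1}^2\begin{pmatrix}0&1\\-1&0\end{pmatrix}$. Gaussian states are those fully characterized by displacement and covariance matrix $G^{ab}=\mathrm{Tr}[\hat\xi^a\sigma\hat\xi^b+\hat\xi^b\sigma\hat\xi^a]-2z^az^b$. $\mathcal U_M(\sigma)=U_M\sigma U_M^\dagger$ with $U_M^\dagger\hat\xi^aU_M=\sum_bM^a{}_b\hat\xi^b$, so the covariance matrix transforms as $G\mapsto MGM^\intercal$. $I(A;B)=S(A)+S(B)-S(AB)$ with von Neumann entropies. *)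

theory Defs
  imports Complex_Main "HOL-Library.Extended_Real" "Jordan_Normal_Form.Matrix"
begin

text \<open>Symplectic form Omega_n = direct sum of n blocks ((0,1),(-1,0)), quadrature
 ordering (q_1,p_1,...,q_n,p_n), indices starting at 0.\<close>
definition Omega :: "nat \<Rightarrow> real mat" where
  "Omega n = mat (2*n) (2*n) (\<lambda>(i,j).
     if even i \<and> j = i + 1 then 1 else if odd i \<and> i = j + 1 then -1 else 0)"

text \<open>Covariance matrices of (Gaussian) quantum states of n modes:
 real symmetric G with G + i Omega positive semidefinite (uncertainty principle).\<close>
definition quantum_cov :: "nat \<Rightarrow> real mat \<Rightarrow> bool" where
  "quantum_cov n G \<longleftrightarrow> G \<in> carrier_mat (2*n) (2*n) \<and> transpose_mat G = G \<and>
     (\<forall>v \<in> carrier_vec (2*n).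
        let H = map_mat complex_of_real G + \<i> \<cdot>\<^sub>m map_mat complex_of_real (Omega n)
        in Im ((H *\<^sub>v v) \<bullet>c v) = 0 \<and> 0 \<le> Re ((H *\<^sub>v v) \<bullet>c v))"

definition symplectic_mat :: "nat \<Rightarrow> real mat \<Rightarrow> bool" where
  "symplectic_mat n S \<longleftrightarrow> S \<in> carrier_mat (2*n) (2*n) \<and>
     S * Omega n * transpose_mat S = Omega n"

definition williamson_diag :: "nat \<Rightarrow> (nat \<Rightarrow> real) \<Rightarrow> real mat" where
  "williamson_diag n \<nu> = mat (2*n) (2*n) (\<lambda>(i,j). if i = j then \<nu> (i div 2) else 0)"

definition symp_eigs :: "nat \<Rightarrow> real mat \<Rightarrow> nat \<Rightarrow> real" where
  "symp_eigs n G = (SOME \<nu>. (\<forall>k<n. 0 < \<nu> k) \<and>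
     (\<exists>S. symplectic_mat n S \<and> S * G * transpose_mat S = williamson_diag n \<nu>))"

text \<open>Von Neumann entropy (natural log) of a mode with symplectic eigenvalue nu
 (vacuum covariance = identity). Note 0 * ln 0 = 0 holds trivially.\<close>
definition hfun :: "real \<Rightarrow> real" where
  "hfun \<nu> = ((\<nu> + 1) / 2) * ln ((\<nu> + 1) / 2) - ((\<nu> - 1) / 2) * ln ((\<nu> - 1) / 2)"

definition gauss_entropy :: "nat \<Rightarrow> real mat \<Rightarrow> real" where
  "gauss_entropy n G = (\<Sum>k<n. hfun (symp_eigs n G k))"

definition cov_A :: "real mat \<Rightarrow> real mat" where
  "cov_A G = mat 2 2 (\<lambda>(i,j). G $$ (i,j))"
definition cov_B :: "real mat \<Rightarrow> real mat" where
  "cov_B G = mat 2 2 (\<lambda>(i,j). G $$ (i+2,j+2))"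

definition mutual_info :: "real mat \<Rightarrow> real" where
  "mutual_info G = gauss_entropy 1 (cov_A G) + gauss_entropy 1 (cov_B G) - gauss_entropy 2 G"

definition Mt :: "real \<Rightarrow> real mat" where
  "Mt t = mat 4 4 (\<lambda>(i,j).
     if i = j then 1 else if (i,j) = (0,2) then t else if (i,j) = (3,1) then -t else 0)"

end

theory Submission
  imports Defs
begin

text \<open>The witness is a product of two oppositely squeezed vacua: mode 1 squeezed in \<open>p\<close>, mode 2
  squeezed in \<open>q\<close>, both to variance \<open>s\<^sup>2\<close>. Its local states are pure, so its mutual
  information is at most zero. The shear \<open>M(t)\<close> only feeds the squeezed quadratures \<open>q\<^sub>2\<close> and
  \<open>p\<^sub>1\<close> into the antisqueezed ones, so the evolved reduced states have symplectic eigenvalue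
  \<open>sqrt (1 + (t s\<^sup>2)\<^sup>2)\<close>, close to 1 for small \<open>s\<close>. Global entropies never need to be
  computed: the uncertainty principle forces every symplectic eigenvalue to be at least 1, so
  they are nonnegative and only decrease the mutual information.\<close>

lemma Re_complexified_form:
  fixes A B :: "real mat" and x y :: "real vec"
  assumes "A \<in> carrier_mat m m" "B \<in> carrier_mat m m" "x \<in> carrier_vec m" "y \<in> carrier_vec m"
  defines "v \<equiv> vec m (\<lambda>j. Complex (x $ j) (y $ j))"
  shows "Re (((map_mat complex_of_real A + \<i> \<cdot>\<^sub>m map_mat complex_of_real B) *\<^sub>v v) \<bullet>c v)
    = x \<bullet> (A *\<^sub>v x) + y \<bullet> (A *\<^sub>v y) - x \<bullet> (B *\<^sub>v y) + y \<bullet> (B *\<^sub>v x)"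
  using assms
  by (simp add: scalar_prod_def mult_mat_vec_def sum_distrib_left sum_distrib_right
      sum_subtractf[symmetric] sum.distrib[symmetric] algebra_simps)

lemma index_congruence_mat:
  fixes S A :: "'a::comm_ring_1 mat"
  assumes "S \<in> carrier_mat k m" "A \<in> carrier_mat m m" "a < k" "b < k"
  shows "(S * A * transpose_mat S) $$ (a, b) = row S a \<bullet> (A *\<^sub>v row S b)"
proof -
  have "S * A * transpose_mat S = S * (A * transpose_mat S)"
    using assms by (intro assoc_mult_mat) auto
  with assms show ?thesis
    by (simp add: col_mult2[of _ m m _ k])
qed

lemma congruence_mult:
  fixes A B C :: "'a::comm_ring_1 mat"
  assumes "A \<in> carrier_mat n n" "B \<in> carrier_mat n n" "C \<in> carrier_mat n n"
  shows "(A * B) * C * transpose_mat (A * B) = A * (B * C * transpose_mat B) * transpose_mat A"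
proof -
  have "transpose_mat (A * B) = transpose_mat B * transpose_mat A"
    using assms by (intro transpose_mult) auto
  with assms show ?thesis by (simp add: assoc_mult_mat[of _ n n _ n _ n])
qed

lemma Omega_carrier [simp]: "Omega n \<in> carrier_mat (2*n) (2*n)"
  by (simp add: Omega_def)

lemma symplectic_mat_mult:
  assumes "symplectic_mat n S" "symplectic_mat n T"
  shows "symplectic_mat n (S * T)"
  using assms congruence_mult[of S "2*n" T "Omega n"] by (auto simp: symplectic_mat_def)

lemma symplectic_mat_one: "symplectic_mat n (1\<^sub>m (2*n))"
  using left_mult_one_mat[OF Omega_carrier] right_mult_one_mat[OF Omega_carrier]
  by (simp add: symplectic_mat_def)

text \<open>Only when this holds is \<open>symp_eigs\<close> a genuine Williamson spectrum rather than an
  unspecified choice.\<close>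

definition williamson_decomposable :: "nat \<Rightarrow> real mat \<Rightarrow> bool" where
  "williamson_decomposable n G \<longleftrightarrow> (\<exists>\<nu>. (\<forall>k<n. 0 < \<nu> k) \<and>
     (\<exists>S. symplectic_mat n S \<and> S * G * transpose_mat S = williamson_diag n \<nu>))"

lemma symp_eigs_williamson:
  assumes "williamson_decomposable n G"
  shows "(\<forall>k<n. 0 < symp_eigs n G k) \<and>
    (\<exists>S. symplectic_mat n S \<and> S * G * transpose_mat S = williamson_diag n (symp_eigs n G))"
  using assms unfolding williamson_decomposable_def symp_eigs_def by (rule someI_ex)

lemma williamson_decomposable_congruence:
  assumes "williamson_decomposable n G" "G \<in> carrier_mat (2*n) (2*n)"
    and "T \<in> carrier_mat (2*n) (2*n)" "symplectic_mat n T'" "T' * T = 1\<^sub>m (2*n)"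
  shows "williamson_decomposable n (T * G * transpose_mat T)"
proof -
  from assms(1) obtain \<nu> S where \<nu>: "\<forall>k<n. 0 < \<nu> k" and S: "symplectic_mat n S"
    and SG: "S * G * transpose_mat S = williamson_diag n \<nu>"
    unfolding williamson_decomposable_def by blast
  have carrier: "S \<in> carrier_mat (2*n) (2*n)" "T' \<in> carrier_mat (2*n) (2*n)"
    using S assms(4) by (auto simp: symplectic_mat_def)
  have "(S * T') * (T * G * transpose_mat T) * transpose_mat (S * T')
      = S * (T' * (T * G * transpose_mat T) * transpose_mat T') * transpose_mat S"
    using carrier assms(2,3) by (intro congruence_mult) auto
  also have "T' * (T * G * transpose_mat T) * transpose_mat T' = (T' * T) * G * transpose_mat (T' * T)"
    using carrier assms(2,3) by (intro congruence_mult[symmetric])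
  also have "(T' * T) * G * transpose_mat (T' * T) = G"
    using assms(2) by (simp add: assms(5))
  also have "S * G * transpose_mat S = williamson_diag n \<nu>"
    by (rule SG)
  finally show ?thesis
    unfolding williamson_decomposable_def
    using \<nu> symplectic_mat_mult[OF S assms(4)] by blast
qed

text \<open>Test the uncertainty principle on the complex vector with real part row \<open>2k\<close> and
  imaginary part row \<open>2k+1\<close> of \<open>S\<close>: the form evaluates to \<open>2\<nu>\<^sub>k - 2\<close>.\<close>

lemma williamson_diag_ge_one:
  assumes G: "quantum_cov n G" and S: "symplectic_mat n S"
    and SG: "S * G * transpose_mat S = williamson_diag n \<nu>" and k: "k < n"
  shows "1 \<le> \<nu> k"
proof -
  have carrier: "G \<in> carrier_mat (2*n) (2*n)" "S \<in> carrier_mat (2*n) (2*n)"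
    using G S by (auto simp: quantum_cov_def symplectic_mat_def)
  have SO: "S * Omega n * transpose_mat S = Omega n"
    using S by (simp add: symplectic_mat_def)
  define x y where "x = row S (2*k)" and "y = row S (2*k+1)"
  have xy: "x \<in> carrier_vec (2*n)" "y \<in> carrier_vec (2*n)"
    using carrier by (auto simp: x_def y_def row_def)
  define v where "v = vec (2*n) (\<lambda>j. Complex (x $ j) (y $ j))"
  have "v \<in> carrier_vec (2*n)" by (simp add: v_def)
  with G have "0 \<le> Re (((map_mat complex_of_real G + \<i> \<cdot>\<^sub>m map_mat complex_of_real (Omega n))
      *\<^sub>v v) \<bullet>c v)"
    unfolding quantum_cov_def Let_def by blast
  also have "\<dots> = x \<bullet> (G *\<^sub>v x) + y \<bullet> (G *\<^sub>v y) - x \<bullet> (Omega n *\<^sub>v y) + y \<bullet> (Omega n *\<^sub>v x)"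
    unfolding v_def using carrier xy by (intro Re_complexified_form) auto
  also have "\<dots> = (S * G * transpose_mat S) $$ (2*k, 2*k)
      + (S * G * transpose_mat S) $$ (2*k+1, 2*k+1)
      - (S * Omega n * transpose_mat S) $$ (2*k, 2*k+1)
      + (S * Omega n * transpose_mat S) $$ (2*k+1, 2*k)"
  proof -
    have entry: "(S * M * transpose_mat S) $$ (a, b) = row S a \<bullet> (M *\<^sub>v row S b)"
      if "M \<in> carrier_mat (2*n) (2*n)" "a < 2*n" "b < 2*n" for M a b
      using carrier(2) that by (rule index_congruence_mat)
    have "2*k < 2*n" "2*k+1 < 2*n" using k by auto
    then show ?thesis
      by (simp only: entry carrier(1) Omega_carrier x_def y_def)
  qed
  also have "\<dots> = 2 * \<nu> k - 2"
    unfolding SG SO using k by (simp add: williamson_diag_def Omega_def)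
  finally show ?thesis by simp
qed

lemma symp_eigs_ge_one:
  assumes "quantum_cov n H" "symplectic_mat n T"
    and "williamson_decomposable n (T * H * transpose_mat T)" "k < n"
  shows "1 \<le> symp_eigs n (T * H * transpose_mat T) k"
proof -
  obtain S where S: "symplectic_mat n S"
    and SG: "S * (T * H * transpose_mat T) * transpose_mat S
      = williamson_diag n (symp_eigs n (T * H * transpose_mat T))"
    using symp_eigs_williamson[OF assms(3)] by blast
  have "S \<in> carrier_mat (2*n) (2*n)" "T \<in> carrier_mat (2*n) (2*n)" "H \<in> carrier_mat (2*n) (2*n)"
    using S assms(1,2) by (auto simp: symplectic_mat_def quantum_cov_def)
  then have "(S * T) * H * transpose_mat (S * T) = S * (T * H * transpose_mat T) * transpose_mat S"
    by (intro congruence_mult)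
  then have "(S * T) * H * transpose_mat (S * T)
      = williamson_diag n (symp_eigs n (T * H * transpose_mat T))"
    using SG by simp
  then show ?thesis
    using williamson_diag_ge_one[OF assms(1) symplectic_mat_mult[OF S assms(2)] _ assms(4)] by blast
qed

lemma hfun_one: "hfun 1 = 0"
  by (simp add: hfun_def)

lemma hfun_nonneg:
  assumes "1 \<le> \<nu>"
  shows "0 \<le> hfun \<nu>"
proof -
  define y where "y = (\<nu> - 1) / 2"
  have y: "0 \<le> y" using assms by (simp add: y_def)
  have x: "(\<nu> + 1) / 2 = y + 1" by (simp add: y_def field_simps)
  have "y * ln y \<le> (y + 1) * ln (y + 1)"
  proof (cases "y \<le> 1")
    case True
    then have "y * ln y \<le> 0"
      using y by (cases "y = 0") (auto simp: mult_nonneg_nonpos)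
    moreover have "0 \<le> (y + 1) * ln (y + 1)" using y by simp
    ultimately show ?thesis by linarith
  next
    case False
    then show ?thesis using y by (intro mult_mono) auto
  qed
  then show ?thesis unfolding hfun_def x y_def[symmetric] by simp
qed

lemma gauss_entropy_nonneg:
  assumes "quantum_cov n H" "symplectic_mat n T"
    and "williamson_decomposable n (T * H * transpose_mat T)"
  shows "0 \<le> gauss_entropy n (T * H * transpose_mat T)"
  unfolding gauss_entropy_def using symp_eigs_ge_one[OF assms]
  by (intro sum_nonneg hfun_nonneg) auto

lemma neg_mult_ln_le_two_sqrt:
  fixes y :: real
  assumes "0 \<le> y"
  shows "- (y * ln y) \<le> 2 * sqrt y"
proof (cases "y = 0")
  case False
  with assms have y: "0 < y" by simp
  have "ln (1 / sqrt y) \<le> 1 / sqrt y - 1" by (rule ln_le_minus_one) (use y in simp)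
  moreover have "ln (1 / sqrt y) = - ln y / 2" using y by (simp add: ln_div ln_sqrt)
  ultimately have "- ln y \<le> 2 / sqrt y" by (simp add: field_simps)
  then have "y * (- ln y) \<le> y * (2 / sqrt y)" using y by (intro mult_left_mono) auto
  also have "y * (2 / sqrt y) = 2 * sqrt y" using y by (simp add: field_simps)
  finally show ?thesis by simp
qed simp

lemma hfun_le:
  assumes "1 \<le> \<nu>"
  shows "hfun \<nu> \<le> (\<nu>\<^sup>2 - 1) / 4 + sqrt (\<nu>\<^sup>2 - 1)"
proof -
  define x y where "x = (\<nu> + 1) / 2" and "y = (\<nu> - 1) / 2"
  have "x * ln x \<le> x * (x - 1)"
    using assms by (intro mult_left_mono ln_le_minus_one) (auto simp: x_def)
  also have "x * (x - 1) = (\<nu>\<^sup>2 - 1) / 4" by (simp add: x_def field_simps power2_eq_square)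
  finally have x_part: "x * ln x \<le> (\<nu>\<^sup>2 - 1) / 4" .
  have "(\<nu>\<^sup>2 - 1) / 4 - y = (\<nu> - 1)\<^sup>2 / 4"
    by (simp add: y_def power2_eq_square field_simps)
  then have "y \<le> (\<nu>\<^sup>2 - 1) / 4"
    by (metis diff_ge_0_iff_ge divide_nonneg_pos zero_le_power2 zero_less_numeral)
  then have "2 * sqrt y \<le> sqrt (\<nu>\<^sup>2 - 1)"
    using real_sqrt_le_mono[of y "(\<nu>\<^sup>2 - 1) / 4"] by (simp add: real_sqrt_divide)
  moreover have "- (y * ln y) \<le> 2 * sqrt y"
    using assms by (intro neg_mult_ln_le_two_sqrt) (simp add: y_def)
  ultimately show ?thesis
    using x_part unfolding hfun_def x_def[symmetric] y_def[symmetric] by linarith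
qed

lemma ln_2_le: "ln (2::real) \<le> 9/10"
proof -
  have "sqrt 2 \<le> (29/20::real)" by (rule real_le_lsqrt) (auto simp: power2_eq_square)
  moreover have "ln (sqrt 2) \<le> sqrt 2 - 1" by (rule ln_le_minus_one) simp
  moreover have "ln (sqrt 2) = ln 2 / (2::real)" by (simp add: ln_sqrt)
  ultimately show ?thesis by linarith
qed

lemma sum_four: "(\<Sum>i\<in>{0..<4::nat}. f i) = f 0 + f 1 + f 2 + f 3"
  by (simp add: numeral_eq_Suc atLeast0LessThan lessThan_Suc add_ac)

lemma sum_two: "(\<Sum>i\<in>{0..<2::nat}. f i) = f 0 + f 1"
  by (simp add: numeral_eq_Suc atLeast0LessThan lessThan_Suc add_ac)

lemma less_four: "(i::nat) < 4 \<longleftrightarrow> i = 0 \<or> i = 1 \<or> i = 2 \<or> i = 3"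
  by auto

lemma less_two: "(i::nat) < 2 \<longleftrightarrow> i = 0 \<or> i = 1"
  by auto

lemma symplectic_mat_1_det:
  assumes "symplectic_mat 1 S"
  shows "S $$ (0,0) * S $$ (1,1) - S $$ (0,1) * S $$ (1,0) = 1"
proof -
  have "S \<in> carrier_mat 2 2" and SO: "S * Omega 1 * transpose_mat S = Omega 1"
    using assms by (auto simp: symplectic_mat_def)
  show ?thesis
    using \<open>S \<in> carrier_mat 2 2\<close> arg_cong[OF SO, of "\<lambda>M. M $$ (0,1)"]
    by (simp add: Omega_def scalar_prod_def sum_two)
qed

lemma williamson_decomposable_one_mode_diag:
  assumes X: "X \<in> carrier_mat 2 2" "X $$ (0,1) = 0" "X $$ (1,0) = 0"
      "X $$ (0,0) = p" "X $$ (1,1) = q"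
    and pq: "0 < p" "0 < q"
  shows "williamson_decomposable 1 X"
proof -
  define r where "r = sqrt (p * q)"
  define \<alpha> where "\<alpha> = sqrt (r / p)"
  have r: "0 < r" "r * r = p * q"
    using assms by (auto simp: r_def)
  have \<alpha>: "0 < \<alpha>" "\<alpha> * \<alpha> = r / p"
    using assms r by (auto simp: \<alpha>_def)
  have scaled: "\<alpha> * \<alpha> * p = r" "q / (\<alpha> * \<alpha>) = r"
    using pq r by (simp_all add: \<alpha>(2) field_simps)
  define S where "S = mat 2 2 (\<lambda>(i,j). if i = j then (if i = 0 then \<alpha> else 1 / \<alpha>) else 0)"
  have "symplectic_mat 1 S"
    using \<alpha> by (auto simp: symplectic_mat_def S_def Omega_def scalar_prod_def sum_two less_two
        intro!: eq_matI)
  moreover have "S * X * transpose_mat S = williamson_diag 1 (\<lambda>_. r)"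
    using X scaled by (auto simp: S_def williamson_diag_def scalar_prod_def sum_two less_two
        intro!: eq_matI)
  ultimately show ?thesis
    unfolding williamson_decomposable_def using r by (auto intro!: exI[of _ "\<lambda>_. r"])
qed

text \<open>A symplectic \<open>2\<times>2\<close> matrix has determinant 1, so \<open>S X S\<^sup>T = \<nu> I\<close> forces
  \<open>\<nu>\<^sup>2 = det X\<close>; the Lagrange identity below is this determinant computation.\<close>

lemma symp_eigs_one_mode_diag:
  assumes X: "X \<in> carrier_mat 2 2" "X $$ (0,1) = 0" "X $$ (1,0) = 0"
      "X $$ (0,0) = p" "X $$ (1,1) = q"
    and "0 < p" "0 < q"
  shows "symp_eigs 1 X 0 = sqrt (p * q)"
proof -
  define \<nu> where "\<nu> = symp_eigs 1 X 0"
  obtain S where pos: "0 < \<nu>" and S: "symplectic_mat 1 S"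
    and SX: "S * X * transpose_mat S = williamson_diag 1 (symp_eigs 1 X)"
    using symp_eigs_williamson[OF williamson_decomposable_one_mode_diag[OF assms]]
    unfolding \<nu>_def by auto
  have Sc: "S \<in> carrier_mat 2 2" using S by (simp add: symplectic_mat_def)
  have entry: "(S * X * transpose_mat S) $$ (i,j)
      = S $$ (i,0) * S $$ (j,0) * p + S $$ (i,1) * S $$ (j,1) * q" if "i < 2" "j < 2" for i j
    using Sc X that by (simp add: scalar_prod_def sum_two algebra_simps)
  have diag: "(S * X * transpose_mat S) $$ (i,j) = (if i = j then \<nu> else 0)"
    if "i < 2" "j < 2" for i j
    using that unfolding SX by (simp add: williamson_diag_def \<nu>_def)
  have w: "S $$ (0,0) * S $$ (0,0) * p + S $$ (0,1) * S $$ (0,1) * q = \<nu>"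
      "S $$ (1,0) * S $$ (1,0) * p + S $$ (1,1) * S $$ (1,1) * q = \<nu>"
      "S $$ (0,0) * S $$ (1,0) * p + S $$ (0,1) * S $$ (1,1) * q = 0"
    using entry[of 0 0] entry[of 1 1] entry[of 0 1] diag[of 0 0] diag[of 1 1] diag[of 0 1]
    by simp_all
  have lagrange:
    "(a*a*p + b*b*q) * (c*c*p + d*d*q) - (a*c*p + b*d*q)\<^sup>2 = p*q * (a*d - b*c)\<^sup>2"
    for a b c d :: real
    by (simp add: power2_eq_square algebra_simps)
  have "\<nu> * \<nu> = p * q"
    using lagrange[of "S $$ (0,0)" "S $$ (0,1)" "S $$ (1,0)" "S $$ (1,1)"] w
      symplectic_mat_1_det[OF S] by simp
  then have "sqrt (p * q) = \<nu>"
    using pos by (metis less_eq_real_def real_sqrt_abs2 abs_of_nonneg power2_eq_square)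
  then show ?thesis
    unfolding \<nu>_def by simp
qed

definition squeezed_pair_cov :: "real \<Rightarrow> real mat" where
  "squeezed_pair_cov s = mat 4 4 (\<lambda>(i,j).
     if i = j then (if i = 0 \<or> i = 3 then 1 / s\<^sup>2 else s\<^sup>2) else 0)"

definition sheared_pair_cov :: "real \<Rightarrow> real \<Rightarrow> real mat" where
  "sheared_pair_cov t s = mat 4 4 (\<lambda>(i,j).
     if (i,j) = (0,0) \<or> (i,j) = (3,3) then 1 / s\<^sup>2 + t\<^sup>2 * s\<^sup>2
     else if (i,j) = (1,1) \<or> (i,j) = (2,2) then s\<^sup>2
     else if (i,j) = (0,2) \<or> (i,j) = (2,0) then t * s\<^sup>2
     else if (i,j) = (1,3) \<or> (i,j) = (3,1) then - t * s\<^sup>2 else 0)"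

lemma Mt_squeezed_pair_cov:
  "Mt t * squeezed_pair_cov s * transpose_mat (Mt t) = sheared_pair_cov t s"
  by (auto simp: Mt_def squeezed_pair_cov_def sheared_pair_cov_def scalar_prod_def sum_four
      less_four power2_eq_square intro!: eq_matI)

lemma symplectic_Mt: "symplectic_mat 2 (Mt t)"
  by (auto simp: symplectic_mat_def Mt_def Omega_def scalar_prod_def sum_four less_four
      intro!: eq_matI)

lemma Mt_inverse: "Mt (- t) * Mt t = 1\<^sub>m 4"
  by (auto simp: Mt_def scalar_prod_def sum_four less_four intro!: eq_matI)

lemma one_mode_uncertainty_form:
  fixes z w :: complex and a e :: real
  assumes ae: "1 \<le> a * e" and e: "0 < e"
  defines "Q \<equiv> (complex_of_real a * z + \<i> * w) * cnj z + (complex_of_real e * w - \<i> * z) * cnj w"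
  shows "Im Q = 0" "0 \<le> Re Q"
proof -
  show "Im Q = 0" unfolding Q_def by (simp add: algebra_simps)
  have "e * Re Q
      = (a * e - 1) * ((Re z)\<^sup>2 + (Im z)\<^sup>2) + (Re z - e * Im w)\<^sup>2 + (Im z + e * Re w)\<^sup>2"
    unfolding Q_def by (simp add: algebra_simps power2_eq_square)
  also have "0 \<le> \<dots>" using ae by simp
  finally show "0 \<le> Re Q" using e by (simp add: zero_le_mult_iff)
qed

lemma quantum_cov_squeezed_pair:
  assumes "s \<noteq> 0"
  shows "quantum_cov 2 (squeezed_pair_cov s)"
  unfolding quantum_cov_def Let_def
proof (intro conjI ballI)
  show "squeezed_pair_cov s \<in> carrier_mat (2*2) (2*2)"
    by (simp add: squeezed_pair_cov_def)
  show "transpose_mat (squeezed_pair_cov s) = squeezed_pair_cov s"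
    by (auto simp: squeezed_pair_cov_def intro!: eq_matI)
  fix v :: "complex vec"
  assume v: "v \<in> carrier_vec (2*2)"
  define a e where "a = 1 / s\<^sup>2" and "e = s\<^sup>2"
  have ae: "1 \<le> a * e" "1 \<le> e * a" "0 < a" "0 < e"
    using assms by (auto simp: a_def e_def)
  let ?H = "map_mat complex_of_real (squeezed_pair_cov s) + \<i> \<cdot>\<^sub>m map_mat complex_of_real (Omega 2)"
  have form: "(?H *\<^sub>v v) \<bullet>c v
    = ((complex_of_real a * v$0 + \<i> * v$1) * cnj (v$0) + (complex_of_real e * v$1 - \<i> * v$0) * cnj (v$1))
    + ((complex_of_real e * v$2 + \<i> * v$3) * cnj (v$2) + (complex_of_real a * v$3 - \<i> * v$2) * cnj (v$3))"
    using v by (simp add: scalar_prod_def sum_four Omega_def squeezed_pair_cov_def a_def e_def)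
  show "Im ((?H *\<^sub>v v) \<bullet>c v) = 0"
    unfolding form
    using one_mode_uncertainty_form(1)[OF ae(1) ae(4)] one_mode_uncertainty_form(1)[OF ae(2) ae(3)]
    by simp
  show "0 \<le> Re ((?H *\<^sub>v v) \<bullet>c v)"
    unfolding form
    using one_mode_uncertainty_form(2)[OF ae(1) ae(4)] one_mode_uncertainty_form(2)[OF ae(2) ae(3)]
    by simp
qed

lemma williamson_decomposable_squeezed_pair:
  assumes "s \<noteq> 0"
  shows "williamson_decomposable 2 (squeezed_pair_cov s)"
proof -
  define S where
    "S = mat 4 4 (\<lambda>(i,j). if i = j then (if i = 0 \<or> i = 3 then s else 1 / s) else 0)"
  have "symplectic_mat 2 S"
    using assms by (auto simp: symplectic_mat_def S_def Omega_def scalar_prod_def sum_four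
        less_four intro!: eq_matI)
  moreover have "S * squeezed_pair_cov s * transpose_mat S = williamson_diag 2 (\<lambda>_. 1)"
    using assms by (auto simp: S_def squeezed_pair_cov_def williamson_diag_def scalar_prod_def
        sum_four less_four power2_eq_square intro!: eq_matI)
  ultimately show ?thesis
    unfolding williamson_decomposable_def by (auto intro!: exI[of _ "\<lambda>_. 1"])
qed

lemma gauss_entropy_one_mode_diag:
  assumes "X \<in> carrier_mat 2 2" "X $$ (0,1) = 0" "X $$ (1,0) = 0"
      "X $$ (0,0) = p" "X $$ (1,1) = q"
    and "0 < p" "0 < q"
  shows "gauss_entropy 1 X = hfun (sqrt (p * q))"
  using symp_eigs_one_mode_diag[OF assms] by (simp add: gauss_entropy_def)

lemma mutual_info_squeezed_pair:
  assumes "s \<noteq> 0"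
  shows "mutual_info (squeezed_pair_cov s) \<le> 0"
proof -
  let ?G = "squeezed_pair_cov s"
  have "gauss_entropy 1 (cov_A ?G) = hfun (sqrt (1 / s\<^sup>2 * s\<^sup>2))"
    using assms by (intro gauss_entropy_one_mode_diag) (auto simp: cov_A_def squeezed_pair_cov_def)
  moreover have "gauss_entropy 1 (cov_B ?G) = hfun (sqrt (s\<^sup>2 * (1 / s\<^sup>2)))"
    using assms by (intro gauss_entropy_one_mode_diag) (auto simp: cov_B_def squeezed_pair_cov_def)
  moreover have "1\<^sub>m 4 * ?G * transpose_mat (1\<^sub>m 4) = ?G"
    by (simp add: squeezed_pair_cov_def)
  then have "0 \<le> gauss_entropy 2 ?G"
    using gauss_entropy_nonneg[OF quantum_cov_squeezed_pair[OF assms] symplectic_mat_one]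
      williamson_decomposable_squeezed_pair[OF assms] by simp
  ultimately show ?thesis
    using assms by (simp add: mutual_info_def hfun_one)
qed

lemma mutual_info_sheared_pair:
  assumes "s \<noteq> 0"
  shows "mutual_info (sheared_pair_cov t s) \<le> 2 * hfun (sqrt (1 + (t * s\<^sup>2)\<^sup>2))"
proof -
  let ?G = "sheared_pair_cov t s"
  have local_eig: "(1 / s\<^sup>2 + t\<^sup>2 * s\<^sup>2) * s\<^sup>2 = 1 + (t * s\<^sup>2)\<^sup>2"
    using assms by (simp add: field_simps power2_eq_square)
  have "gauss_entropy 1 (cov_A ?G) = hfun (sqrt ((1 / s\<^sup>2 + t\<^sup>2 * s\<^sup>2) * s\<^sup>2))"
    using assms by (intro gauss_entropy_one_mode_diag)
      (auto simp: cov_A_def sheared_pair_cov_def add_pos_nonneg)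
  moreover have "gauss_entropy 1 (cov_B ?G) = hfun (sqrt (s\<^sup>2 * (1 / s\<^sup>2 + t\<^sup>2 * s\<^sup>2)))"
    using assms by (intro gauss_entropy_one_mode_diag)
      (auto simp: cov_B_def sheared_pair_cov_def add_pos_nonneg)
  moreover have "williamson_decomposable 2 (Mt t * squeezed_pair_cov s * transpose_mat (Mt t))"
    using williamson_decomposable_squeezed_pair[OF assms] symplectic_Mt Mt_inverse
    by (intro williamson_decomposable_congruence) (auto simp: squeezed_pair_cov_def Mt_def)
  then have "0 \<le> gauss_entropy 2 ?G"
    using gauss_entropy_nonneg[OF quantum_cov_squeezed_pair[OF assms] symplectic_Mt]
    by (simp add: Mt_squeezed_pair_cov)
  ultimately show ?thesis
    using local_eig by (simp add: mutual_info_def mult.commute)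
qed

theorem mainTheorem9:
  fixes t :: real
  assumes "0 \<le> t"
  shows "(INF G \<in> {G. quantum_cov 2 G}.
            ereal (mutual_info G + mutual_info (Mt t * G * transpose_mat (Mt t))))
         \<le> ereal (2 * ln (exp 1 / 2))"
proof -
  define u where "u = t + 1"
  define s where "s = 1 / (5 * u)"
  define \<delta> where "\<delta> = t * s\<^sup>2"
  have u: "0 < u" using assms by (simp add: u_def)
  then have s: "s \<noteq> 0" by (simp add: s_def)
  have "\<delta> \<le> u * s\<^sup>2"
    by (simp add: \<delta>_def u_def mult_right_mono)
  also have "\<dots> = 1 / (25 * u)"
    using u by (simp add: s_def power2_eq_square field_simps)
  also have "\<dots> \<le> 1/20"
    using assms u_def by (simp add: field_simps)
  finally have \<delta>: "0 \<le> \<delta>" "\<delta> \<le> 1/20"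
    using assms by (auto simp: \<delta>_def)
  have "hfun (sqrt (1 + \<delta>\<^sup>2)) \<le> \<delta>\<^sup>2 / 4 + \<delta>"
    using hfun_le[of "sqrt (1 + \<delta>\<^sup>2)"] \<delta> by simp
  also have "\<dots> \<le> 1 - ln 2"
    using \<delta> ln_2_le power_mono[OF \<delta>(2) \<delta>(1), of 2] by (simp add: power2_eq_square)
  finally have "mutual_info (squeezed_pair_cov s) + mutual_info (sheared_pair_cov t s)
      \<le> 2 * ln (exp 1 / 2)"
    using mutual_info_squeezed_pair[OF s] mutual_info_sheared_pair[OF s, of t]
    by (simp add: \<delta>_def ln_div)
  moreover have "quantum_cov 2 (squeezed_pair_cov s)"
    using s by (rule quantum_cov_squeezed_pair)
  ultimately show ?thesis
    unfolding Mt_squeezed_pair_cov[symmetric]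
    by (intro INF_lower2[of "squeezed_pair_cov s"]) auto
qed

end
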